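(* For every odd integer $n\ge 7$, $$g_{odd}(\mathrm{Pet}(n,3))=\begin{cases}\frac{n}{3} & \text{if } 3\mid n,\\[2pt] \frac{n+8}{3} & \text{if } n\equiv 1\pmod 3,\\[2pt] \frac{n+10}{3} & \text{if } n\equiv 2\pmod 3.\end{cases}$$
   Context: For integers $n,k$ with $2<2k\le n$, the generalized Petersen graph $\mathrm{Pet}(n,k)$ has vertex set $\{u_0,\dots,u_{n-1}\}\cup\{v_0,\dots,v_{n-1}\}$ and edge set $\{u_iu_{i+1}\}\cup\{u_iv_i\}\cup\{v_iv_{i+k}\}$, indices modulo $n$. $g_{odd}(G)$ denotes the length of a shortest odd cycle of $G$. *)

theory Defs
  imports Main
begin

text \<open>Generalized Petersen graph Pet(n,k). Vertex (False, i) is u_i, vertex (True, i) is v_i,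
  for i < n. Edges: u_i u_{i+1}, u_i v_i, v_i v_{i+k}, indices modulo n.\<close>

definition pet_vertices :: "nat \<Rightarrow> (bool \<times> nat) set" where
  "pet_vertices n = UNIV \<times> {..<n}"

definition pet_edge0 :: "nat \<Rightarrow> nat \<Rightarrow> (bool \<times> nat) \<Rightarrow> (bool \<times> nat) \<Rightarrow> bool" where
  "pet_edge0 n k x y \<longleftrightarrow>
     (\<exists>i<n. (x = (False, i) \<and> y = (False, (i + 1) mod n))
          \<or> (x = (False, i) \<and> y = (True, i))
          \<or> (x = (True, i) \<and> y = (True, (i + k) mod n)))"

definition pet_adj :: "nat \<Rightarrow> nat \<Rightarrow> (bool \<times> nat) \<Rightarrow> (bool \<times> nat) \<Rightarrow> bool" where
  "pet_adj n k x y \<longleftrightarrow> x \<noteq> y \<and> (pet_edge0 n k x y \<or> pet_edge0 n k y x)"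

definition is_cycle :: "'a set \<Rightarrow> ('a \<Rightarrow> 'a \<Rightarrow> bool) \<Rightarrow> 'a list \<Rightarrow> bool" where
  "is_cycle V E c \<longleftrightarrow> length c \<ge> 3 \<and> distinct c \<and> set c \<subseteq> V
     \<and> (\<forall>i < length c. E (c ! i) (c ! ((i + 1) mod length c)))"

definition odd_girth :: "'a set \<Rightarrow> ('a \<Rightarrow> 'a \<Rightarrow> bool) \<Rightarrow> nat" where
  "odd_girth V E = (LEAST l. \<exists>c. is_cycle V E c \<and> length c = l \<and> odd l)"

end

theory Submission
  imports Defs "HOL-Computational_Algebra.Primes"
begin

text \<open>
  Follow a cycle of Pet(n,k) and add up the index changes along its edges: \<open>\<plusminus>1\<close> on an outer
  edge, \<open>\<plusminus>k\<close> on an inner edge, 0 on a spoke. The total S is a multiple of n. Each spoke switches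
  rims, so spokes come in pairs, and for odd k the parity of S is that of the cycle length. An odd
  cycle therefore satisfies \<open>n \<le> \<bar>S\<bar> \<le> #outer + k * #inner\<close>. For k = 3, a cycle on the outer
  rim has length at least n; a cycle on the inner rim has S divisible by 3n unless 3 divides n,
  so its length is at least n, or at least n/3; a cycle using both rims has an outer edge and at
  least two spokes, whence three times its length is at least n + 8. Conversely
  v_0, v_3, ..., v_{n-3} is an odd cycle of length n/3 when 3 divides n, and otherwise
  v_0, v_3, ..., v_{3q}, u_{3q}, ..., u_{n-1}, u_0 with q = n div 3 attains the bound.
\<close>

definition cycle_edges :: "'a list \<Rightarrow> ('a \<times> 'a) list" where
  "cycle_edges c = zip c (rotate1 c)"

definition count_edges :: "('a \<times> 'a \<Rightarrow> bool) \<Rightarrow> 'a list \<Rightarrow> nat" where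
  "count_edges P c = length (filter P (cycle_edges c))"

lemma length_cycle_edges [simp]: "length (cycle_edges c) = length c"
  by (simp add: cycle_edges_def)

lemma count_edges_pos_iff: "0 < count_edges P c \<longleftrightarrow> (\<exists>e\<in>set (cycle_edges c). P e)"
  unfolding count_edges_def by (metis filter_empty_conv length_greater_0_conv)

lemma is_cycle_cycle_edges:
  assumes "is_cycle V E c" and "e \<in> set (cycle_edges c)"
  shows "E (fst e) (snd e)"
  using assms by (auto simp: cycle_edges_def set_zip nth_rotate1 is_cycle_def)

lemma sum_list_cycle_edges_diff:
  fixes f :: "'a \<Rightarrow> 'b::ab_group_add"
  shows "(\<Sum>e\<leftarrow>cycle_edges c. f (snd e) - f (fst e)) = 0"
proof -
  have "map snd (cycle_edges c) = rotate1 c" "map fst (cycle_edges c) = c"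
    by (simp_all add: cycle_edges_def)
  then have "map f (map snd (cycle_edges c)) = map f (rotate1 c)"
    "map f (map fst (cycle_edges c)) = map f c"
    by simp_all
  then have "map (\<lambda>e. f (snd e)) (cycle_edges c) = map f (rotate1 c)"
    "map (\<lambda>e. f (fst e)) (cycle_edges c) = map f c"
    by (simp_all add: comp_def)
  moreover have "sum_list (map f (rotate1 c)) = sum_list (map f c)"
    by (cases c) (simp_all add: add.commute)
  ultimately show ?thesis by (simp add: sum_list_subtractf)
qed

lemma cycle_edges_change:
  assumes "x \<in> set c" "y \<in> set c" "f x \<noteq> f y"
  shows "\<exists>e\<in>set (cycle_edges c). f (fst e) \<noteq> f (snd e)"
proof (rule ccontr)
  assume "\<not> ?thesis"
  then have "map f (map fst (cycle_edges c)) = map f (map snd (cycle_edges c))"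
    by (auto intro: map_cong)
  then have "map f c = map f (rotate1 c)"
    by (simp add: cycle_edges_def)
  then have "rotate1 (map f c) = map f c"
    by (metis rotate1_map)
  then have "card (set (map f c)) = 1"
    using rotate1_fixpoint_card assms(1) by fastforce
  moreover have "{f x, f y} \<subseteq> set (map f c)"
    using assms(1,2) by simp
  ultimately show False
    using assms(3) by (metis card_1_singletonE insert_subset singletonD)
qed

lemma sum_list_of_bool: "(\<Sum>x\<leftarrow>xs. of_bool (P x)) = of_nat (length (filter P xs))"
  by (induction xs) simp_all

lemma even_sum_list_cong:
  fixes f g :: "'a \<Rightarrow> int"
  assumes "\<And>x. x \<in> set xs \<Longrightarrow> even (f x) \<longleftrightarrow> even (g x)"
  shows "even (\<Sum>x\<leftarrow>xs. f x) \<longleftrightarrow> even (\<Sum>x\<leftarrow>xs. g x)"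
  using assms by (induction xs) auto

lemma dvd_sum_list:
  fixes f :: "'a \<Rightarrow> 'b::comm_semiring_1"
  assumes "\<And>x. x \<in> set xs \<Longrightarrow> d dvd f x"
  shows "d dvd (\<Sum>x\<leftarrow>xs. f x)"
  using assms by (induction xs) simp_all

definition spoke :: "(bool \<times> 'a) \<times> (bool \<times> 'a) \<Rightarrow> bool" where
  "spoke e \<longleftrightarrow> fst (fst e) \<noteq> fst (snd e)"

definition outer_edge :: "(bool \<times> 'a) \<times> (bool \<times> 'a) \<Rightarrow> bool" where
  "outer_edge e \<longleftrightarrow> \<not> fst (fst e) \<and> \<not> fst (snd e)"

definition inner_edge :: "(bool \<times> 'a) \<times> (bool \<times> 'a) \<Rightarrow> bool" where
  "inner_edge e \<longleftrightarrow> fst (fst e) \<and> fst (snd e)"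

lemma count_edges_partition:
  "count_edges outer_edge c + count_edges inner_edge c + count_edges spoke c = length c"
proof -
  have "length (filter outer_edge es) + length (filter inner_edge es) + length (filter spoke es)
      = length es" for es :: "((bool \<times> 'a) \<times> (bool \<times> 'a)) list"
    by (induction es) (auto simp: outer_edge_def inner_edge_def spoke_def)
  then show ?thesis by (simp add: count_edges_def)
qed

text \<open>Every spoke switches rim, and the walk returns to its starting rim.\<close>
lemma even_count_spokes: "even (count_edges spoke c)"
proof -
  let ?rim = "\<lambda>x. of_bool (fst x) :: int"
  have rim_change: "even (?rim (snd e) - ?rim (fst e)) \<longleftrightarrow> even (of_bool (spoke e) :: int)" for e
    by (cases "fst (fst e)"; cases "fst (snd e)") (simp_all add: spoke_def)
  have "even (\<Sum>e\<leftarrow>cycle_edges c. ?rim (snd e) - ?rim (fst e))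
      \<longleftrightarrow> even (\<Sum>e\<leftarrow>cycle_edges c. of_bool (spoke e) :: int)"
    by (rule even_sum_list_cong, rule rim_change)
  moreover have "(\<Sum>e\<leftarrow>cycle_edges c. ?rim (snd e) - ?rim (fst e)) = 0"
    by (rule sum_list_cycle_edges_diff)
  ultimately show ?thesis
    by (simp add: sum_list_of_bool count_edges_def)
qed

lemma spoke_if_outer_and_inner:
  assumes "0 < count_edges outer_edge c" "0 < count_edges inner_edge c"
  shows "0 < count_edges spoke c"
proof -
  obtain e e' where e: "e \<in> set (cycle_edges c)" "outer_edge e"
    and e': "e' \<in> set (cycle_edges c)" "inner_edge e'"
    using assms by (auto simp: count_edges_pos_iff)
  have "fst e \<in> set c" "fst e' \<in> set c"
    using e(1) e'(1) by (metis cycle_edges_def prod.collapse set_zip_leftD)+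
  then show ?thesis
    using cycle_edges_change[of "fst e" c "fst e'" fst] e(2) e'(2)
    by (auto simp: count_edges_pos_iff spoke_def outer_edge_def inner_edge_def)
qed

subsection \<open>Displacement along Pet(n,k)\<close>

definition pet_disp :: "nat \<Rightarrow> nat \<Rightarrow> (bool \<times> nat) \<times> (bool \<times> nat) \<Rightarrow> int" where
  "pet_disp n k e =
     (if spoke e then 0
      else let s = (if fst (fst e) then k else 1)
           in if snd (snd e) = (snd (fst e) + s) mod n then int s else - int s)"

definition pet_displacement :: "nat \<Rightarrow> nat \<Rightarrow> (bool \<times> nat) list \<Rightarrow> int" where
  "pet_displacement n k c = (\<Sum>e\<leftarrow>cycle_edges c. pet_disp n k e)"

lemma pet_adj_rim_step:
  assumes "pet_adj n k x y" "fst x = fst y"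
  shows "snd y = (snd x + (if fst x then k else 1)) mod n
       \<or> snd x = (snd y + (if fst x then k else 1)) mod n"
  using assms unfolding pet_adj_def pet_edge0_def by auto

lemma pet_adj_spoke_index:
  assumes "pet_adj n k x y" "fst x \<noteq> fst y"
  shows "snd x = snd y"
  using assms unfolding pet_adj_def pet_edge0_def by auto

lemma pet_disp_cong:
  assumes "pet_adj n k (fst e) (snd e)"
  shows "int n dvd int (snd (snd e)) - int (snd (fst e)) - pet_disp n k e"
proof (cases "spoke e")
  case True
  then show ?thesis
    using pet_adj_spoke_index[OF assms] by (simp add: pet_disp_def spoke_def)
next
  case False
  define s where "s = (if fst (fst e) then k else 1)"
  have step: "snd (snd e) = (snd (fst e) + s) mod n \<or> snd (fst e) = (snd (snd e) + s) mod n"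
    using pet_adj_rim_step[OF assms] False by (simp add: spoke_def s_def)
  have fwd: "int n dvd int a - int b - int s" if "a = (b + s) mod n" for a b
  proof -
    have "int a mod int n = (int b + int s) mod int n"
      using that by (simp add: zmod_int)
    then show ?thesis
      by (simp add: mod_eq_dvd_iff diff_diff_eq)
  qed
  show ?thesis
  proof (cases "snd (snd e) = (snd (fst e) + s) mod n")
    case True
    then show ?thesis
      using fwd[OF True] False by (simp add: pet_disp_def Let_def flip: s_def)
  next
    case backward: False
    then have "snd (fst e) = (snd (snd e) + s) mod n"
      using step by simp
    then have "int n dvd - (int (snd (fst e)) - int (snd (snd e)) - int s)"
      by (simp only: dvd_minus_iff fwd)
    then have "int n dvd int (snd (snd e)) - int (snd (fst e)) + int s"
      by (simp add: algebra_simps)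
    then show ?thesis
      using backward False by (simp add: pet_disp_def Let_def flip: s_def)
  qed
qed

lemma pet_displacement_dvd:
  assumes "is_cycle (pet_vertices n) (pet_adj n k) c"
  shows "int n dvd pet_displacement n k c"
proof -
  let ?idx = "\<lambda>x. int (snd x)"
  have "int n dvd (\<Sum>e\<leftarrow>cycle_edges c. (?idx (snd e) - ?idx (fst e)) - pet_disp n k e)"
    using pet_disp_cong is_cycle_cycle_edges[OF assms] by (intro dvd_sum_list) simp
  also have "(\<Sum>e\<leftarrow>cycle_edges c. (?idx (snd e) - ?idx (fst e)) - pet_disp n k e)
      = - pet_displacement n k c"
    using sum_list_cycle_edges_diff[of ?idx c]
    by (simp only: sum_list_subtractf[where f = "\<lambda>e. ?idx (snd e) - ?idx (fst e)"]
        pet_displacement_def)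
  finally show ?thesis by simp
qed

lemma odd_pet_displacement:
  assumes "odd k" "odd (length c)"
  shows "odd (pet_displacement n k c)"
proof -
  have "even (pet_disp n k e) \<longleftrightarrow> even (of_bool (\<not> spoke e) :: int)" for e
    using assms(1) by (simp add: pet_disp_def Let_def)
  then have "even (pet_displacement n k c) \<longleftrightarrow> even (length (filter (\<lambda>e. \<not> spoke e) (cycle_edges c)))"
    using even_sum_list_cong[of "cycle_edges c"]
    by (simp add: pet_displacement_def sum_list_of_bool)
  moreover have "length (filter (\<lambda>e. \<not> spoke e) (cycle_edges c)) + count_edges spoke c = length c"
    using sum_length_filter_compl[of spoke "cycle_edges c"] by (simp add: count_edges_def)
  ultimately show ?thesis
    using assms(2) even_count_spokes[of c] by (metis even_add)
qed

lemma abs_pet_displacement_le: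
  "\<bar>pet_displacement n k c\<bar> \<le> int (count_edges outer_edge c) + int k * int (count_edges inner_edge c)"
proof -
  have "\<bar>pet_displacement n k c\<bar> \<le> sum_list (map abs (map (pet_disp n k) (cycle_edges c)))"
    unfolding pet_displacement_def by (rule sum_list_abs)
  also have "\<dots> = (\<Sum>e\<leftarrow>cycle_edges c. of_bool (outer_edge e) + int k * of_bool (inner_edge e))"
    unfolding map_map by (intro arg_cong[where f = sum_list] map_cong)
      (auto simp: pet_disp_def Let_def spoke_def outer_edge_def inner_edge_def)
  finally show ?thesis
    by (simp add: sum_list_addf sum_list_const_mult sum_list_of_bool count_edges_def)
qed

lemma pet_displacement_dvd_if_no_outer:
  assumes "count_edges outer_edge c = 0"
  shows "int k dvd pet_displacement n k c"
proof -
  have "\<not> outer_edge e" if "e \<in> set (cycle_edges c)" for e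
    using assms that count_edges_pos_iff[of outer_edge c] by auto
  then show ?thesis
    unfolding pet_displacement_def
    by (intro dvd_sum_list) (auto simp: pet_disp_def Let_def spoke_def outer_edge_def)
qed

lemma abs_pet_displacement_ge:
  assumes "is_cycle (pet_vertices n) (pet_adj n k) c" "odd k" "odd (length c)"
  shows "int n \<le> \<bar>pet_displacement n k c\<bar>"
proof -
  have "pet_displacement n k c \<noteq> 0"
    using odd_pet_displacement[OF assms(2,3), of n] by auto
  then show ?thesis
    using dvd_imp_le_int[OF _ pet_displacement_dvd[OF assms(1)]] by simp
qed

lemma abs_pet_displacement_ge_if_no_outer:
  assumes "is_cycle (pet_vertices n) (pet_adj n k) c" "odd k" "odd (length c)"
    and "count_edges outer_edge c = 0" "coprime k n"
  shows "int k * int n \<le> \<bar>pet_displacement n k c\<bar>"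
proof -
  have "int k dvd pet_displacement n k c" "int n dvd pet_displacement n k c"
    using pet_displacement_dvd_if_no_outer[OF assms(4)] pet_displacement_dvd[OF assms(1)] .
  moreover have "coprime (int k) (int n)"
    using assms(5) by simp
  ultimately have "int k * int n dvd pet_displacement n k c"
    by (rule divides_mult)
  moreover have "pet_displacement n k c \<noteq> 0"
    using odd_pet_displacement[OF assms(2,3), of n] by auto
  ultimately show ?thesis
    using dvd_imp_le_int[of "pet_displacement n k c" "int k * int n"] by simp
qed

subsection \<open>The lower bound for Pet(n,3)\<close>

lemma pet3_odd_cycle_length_bound:
  assumes cycle: "is_cycle (pet_vertices n) (pet_adj n 3) c" and odd: "odd (length c)"
  shows "n \<le> length c \<or> (3 dvd n \<and> n \<le> 3 * length c) \<or> n + 8 \<le> 3 * length c"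
proof -
  define outer inner spokes where counts:
    "outer = count_edges outer_edge c" "inner = count_edges inner_edge c"
    "spokes = count_edges spoke c"
  have L: "length c = outer + inner + spokes"
    using count_edges_partition[of c] by (simp add: counts)
  have n_le: "n \<le> outer + 3 * inner"
    using abs_pet_displacement_ge[OF cycle _ odd] abs_pet_displacement_le[of n 3 c]
    by (simp add: counts)
  consider "inner = 0" | "outer = 0" "0 < inner" | "0 < outer" "0 < inner" by blast
  then show ?thesis
  proof cases
    case 1
    then show ?thesis using n_le L by simp
  next
    case 2
    have "n \<le> inner \<or> 3 dvd n"
    proof (rule disjCI)
      assume "\<not> 3 dvd n"
      then have "coprime 3 n"
        using prime_imp_coprime[of 3 n] by simp
      then have "int 3 * int n \<le> \<bar>pet_displacement n 3 c\<bar>"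
        using 2 by (intro abs_pet_displacement_ge_if_no_outer[OF cycle _ odd]) (simp_all add: counts)
      then show "n \<le> inner"
        using abs_pet_displacement_le[of n 3 c] 2 by (simp add: counts)
    qed
    then show ?thesis using n_le L 2 by auto
  next
    case 3
    then have "0 < spokes"
      using spoke_if_outer_and_inner[of c] by (simp add: counts)
    moreover have "even spokes"
      using even_count_spokes[of c] by (simp add: counts)
    ultimately have "2 \<le> spokes" by presburger
    then show ?thesis using n_le L 3 by linarith
  qed
qed

subsection \<open>Short odd cycles\<close>

lemma is_cycle_map_upt:
  assumes "3 \<le> m" "inj_on f {..<m}" "f ` {..<m} \<subseteq> V"
    and "\<And>i. Suc i < m \<Longrightarrow> E (f i) (f (Suc i))" "E (f (m - 1)) (f 0)"
  shows "is_cycle V E (map f [0..<m])"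
  unfolding is_cycle_def
proof (intro conjI allI impI)
  show "distinct (map f [0..<m])"
    using assms(2) by (simp add: distinct_map atLeast0LessThan)
  show "set (map f [0..<m]) \<subseteq> V"
    using assms(3) by (auto simp: atLeast0LessThan)
  fix i assume "i < length (map f [0..<m])"
  then consider "Suc i < m" | "i = m - 1" by fastforce
  then show "E (map f [0..<m] ! i) (map f [0..<m] ! ((i + 1) mod length (map f [0..<m])))"
    by cases (use assms in auto)
qed (use assms(1) in simp)

lemma pet_adj_sym: "pet_adj n k x y \<longleftrightarrow> pet_adj n k y x"
  unfolding pet_adj_def by auto

lemma pet_adj_outer: "i < n \<Longrightarrow> 2 \<le> n \<Longrightarrow> pet_adj n k (False, i) (False, (i + 1) mod n)"
  unfolding pet_adj_def pet_edge0_def by (auto simp: mod_if)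

lemma pet_adj_inner: "i < n \<Longrightarrow> (i + k) mod n \<noteq> i \<Longrightarrow> pet_adj n k (True, i) (True, (i + k) mod n)"
  unfolding pet_adj_def pet_edge0_def by auto

lemma pet_adj_spoke: "i < n \<Longrightarrow> pet_adj n k (False, i) (True, i)"
  unfolding pet_adj_def pet_edge0_def by auto

lemma pet_inner_cycle:
  assumes "n = k * q" "0 < k" "3 \<le> q"
  shows "is_cycle (pet_vertices n) (pet_adj n k) (map (\<lambda>j. (True, k * j)) [0..<q])"
proof (rule is_cycle_map_upt)
  show "inj_on (\<lambda>j. (True, k * j)) {..<q}"
    using assms(2) by (simp add: inj_on_def)
  show "(\<lambda>j. (True, k * j)) ` {..<q} \<subseteq> pet_vertices n"
    using assms by (auto simp: pet_vertices_def)
  show "pet_adj n k (True, k * i) (True, k * Suc i)" if "Suc i < q" for i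
  proof -
    have "k * Suc i < k * q" using that assms(2) by (simp only: mult_less_cancel1)
    then show ?thesis using pet_adj_inner[of "k * i" n k] that assms by (simp add: add.commute)
  qed
  show "pet_adj n k (True, k * (q - 1)) (True, k * 0)"
    using pet_adj_inner[of "k * (q - 1)" n k] assms
    by (simp add: right_diff_distrib' algebra_simps)
qed (use assms in simp)

definition pet_detour :: "nat \<Rightarrow> nat \<Rightarrow> nat \<Rightarrow> nat \<Rightarrow> bool \<times> nat" where
  "pet_detour k q r i =
     (if i \<le> q then (True, k * i) else if i \<le> q + r then (False, k * q + (i - q - 1)) else (False, 0))"

lemma pet_detour_cycle:
  assumes "n = k * q + r" "0 < k" "0 < q" "0 < r"
  shows "is_cycle (pet_vertices n) (pet_adj n k) (map (pet_detour k q r) [0..<q + r + 2])"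
proof (rule is_cycle_map_upt)
  have "0 < k * q" using assms by simp
  show "inj_on (pet_detour k q r) {..<q + r + 2}"
    using assms by (auto simp: inj_on_def pet_detour_def split: if_splits)
      (use \<open>0 < k * q\<close> in linarith)+
  have "k * i < n" if "i \<le> q" for i
    using that assms mult_le_mono2[of i q k] by linarith
  then show "pet_detour k q r ` {..<q + r + 2} \<subseteq> pet_vertices n"
    using assms by (auto simp: pet_vertices_def pet_detour_def)
  fix i assume i: "Suc i < q + r + 2"
  consider "i < q" | "i = q" | "q < i" "i < q + r" | "i = q + r" using i by linarith
  then show "pet_adj n k (pet_detour k q r i) (pet_detour k q r (Suc i))"
  proof cases
    case 1
    then have "k * i + k < n"
      using assms mult_le_mono2[of "Suc i" q k] by simp
    then show ?thesis
      using pet_adj_inner[of "k * i" n k] 1 assms by (simp add: pet_detour_def add.commute)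
  next
    case 2
    then show ?thesis
      using pet_adj_spoke[of "k * q" n k] assms by (simp add: pet_detour_def pet_adj_sym)
  next
    case 3
    then show ?thesis
      using pet_adj_outer[of "k * q + (i - q - 1)" n k] assms
      by (simp add: pet_detour_def Suc_diff_Suc)
  next
    case 4
    have "2 \<le> n" using assms \<open>0 < k * q\<close> by linarith
    then show ?thesis
      using pet_adj_outer[of "n - 1" n k] 4 assms by (simp add: pet_detour_def)
  qed
next
  show "pet_adj n k (pet_detour k q r (q + r + 2 - 1)) (pet_detour k q r 0)"
    using pet_adj_spoke[of 0 n k] assms by (simp add: pet_detour_def)
qed (use assms in simp)

definition pet3_odd_girth :: "nat \<Rightarrow> nat" where
  "pet3_odd_girth n =
     (if n mod 3 = 0 then n div 3 else if n mod 3 = 1 then (n + 8) div 3 else (n + 10) div 3)"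

lemma odd_pet3_odd_girth: "odd n \<Longrightarrow> odd (pet3_odd_girth n)"
  unfolding pet3_odd_girth_def by presburger

lemma pet3_odd_girth_attained:
  assumes "7 \<le> n"
  shows "\<exists>c. is_cycle (pet_vertices n) (pet_adj n 3) c \<and> length c = pet3_odd_girth n"
proof (cases "3 dvd n")
  case True
  define q where "q = n div 3"
  have "n = 3 * q" "3 \<le> q" using True assms by (auto simp: q_def)
  then have "is_cycle (pet_vertices n) (pet_adj n 3) (map (\<lambda>j. (True, 3 * j)) [0..<q])"
    by (intro pet_inner_cycle) simp_all
  then show ?thesis
    using True by (auto simp: pet3_odd_girth_def q_def)
next
  case False
  define q r where "q = n div 3" "r = n mod 3"
  have n: "n = 3 * q + r" and "0 < q" and r: "r = 1 \<or> r = 2"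
    using False assms unfolding q_r_def by presburger+
  then have "is_cycle (pet_vertices n) (pet_adj n 3) (map (pet_detour 3 q r) [0..<q + r + 2])"
    by (intro pet_detour_cycle) auto
  moreover have "pet3_odd_girth n = q + r + 2"
    using r unfolding n by (auto simp: pet3_odd_girth_def)
  ultimately show ?thesis
    by (metis length_map length_upt diff_zero)
qed

theorem mainTheorem20:
  fixes n :: nat
  assumes "odd n" and "n \<ge> 7"
  shows "odd_girth (pet_vertices n) (pet_adj n 3) =
           (if n mod 3 = 0 then n div 3
            else if n mod 3 = 1 then (n + 8) div 3
            else (n + 10) div 3)"
proof -
  have "odd_girth (pet_vertices n) (pet_adj n 3) = pet3_odd_girth n"
    unfolding odd_girth_def
  proof (rule Least_equality)
    show "\<exists>c. is_cycle (pet_vertices n) (pet_adj n 3) c \<and> length c = pet3_odd_girth n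
        \<and> odd (pet3_odd_girth n)"
      using pet3_odd_girth_attained[OF assms(2)] odd_pet3_odd_girth[OF assms(1)] by blast
  next
    fix l assume "\<exists>c. is_cycle (pet_vertices n) (pet_adj n 3) c \<and> length c = l \<and> odd l"
    then obtain c where "is_cycle (pet_vertices n) (pet_adj n 3) c" "odd (length c)" "length c = l"
      by blast
    then show "pet3_odd_girth n \<le> l"
      using pet3_odd_cycle_length_bound[of n c] assms(2) by (auto simp: pet3_odd_girth_def)
  qed
  then show ?thesis by (simp add: pet3_odd_girth_def)
qed

end
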